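(* Let $n\ge 3$ (even or odd), $k\ge 3$ and $m\ge 2$ be integers. Then the strong metric dimension of $(C_n\square P_k)\square P_m$ is $2n$.
   Context: All graphs are finite and connected; $d(u,v)$ is the shortest-path distance. $C_n$ is the cycle on $n$ vertices and $P_k$ the path on $k$ vertices. The cartesian product $G\square H$ has vertex set $V(G)\times V(H)$, with $(g_1,h_1)$ adjacent to $(g_2,h_2)$ iff either $h_1=h_2$ and $g_1g_2\in E(G)$, or $g_1=g_2$ and $h_1h_2\in E(H)$. A set $Q\subseteq V(G)$ is a strong resolving set of $G$ if for any two distinct vertices $p,q$ of $G$ there is $s\in Q$ such that $p$ lies on some shortest $q$–$s$ path or $q$ lies on some shortest $p$–$s$ path. The strong metric dimension $\mathrm{sdim}(G)$ is the minimum size of a strong resolving set of $G$. *)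

theory Defs
  imports Main
begin

type_synonym 'a graph = "'a set \<times> ('a \<Rightarrow> 'a \<Rightarrow> bool)"

definition verts :: "'a graph \<Rightarrow> 'a set" where "verts G = fst G"
definition adj :: "'a graph \<Rightarrow> 'a \<Rightarrow> 'a \<Rightarrow> bool" where "adj G = snd G"

definition cycle_graph :: "nat \<Rightarrow> nat graph" where
  "cycle_graph n = ({0..<n}, \<lambda>i j. i < n \<and> j < n \<and> i \<noteq> j \<and> (j = (i + 1) mod n \<or> i = (j + 1) mod n))"

definition path_graph :: "nat \<Rightarrow> nat graph" where
  "path_graph k = ({0..<k}, \<lambda>i j. i < k \<and> j < k \<and> (j = i + 1 \<or> i = j + 1))"

definition cart_prod :: "'a graph \<Rightarrow> 'b graph \<Rightarrow> ('a \<times> 'b) graph" where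
  "cart_prod G H = (verts G \<times> verts H,
     \<lambda>(g1, h1) (g2, h2). (h1 = h2 \<and> h1 \<in> verts H \<and> adj G g1 g2)
                      \<or> (g1 = g2 \<and> g1 \<in> verts G \<and> adj H h1 h2))"

definition walk :: "'a graph \<Rightarrow> 'a list \<Rightarrow> bool" where
  "walk G xs \<longleftrightarrow> xs \<noteq> [] \<and> set xs \<subseteq> verts G \<and>
     (\<forall>i. Suc i < length xs \<longrightarrow> adj G (xs ! i) (xs ! Suc i))"

definition walk_betw :: "'a graph \<Rightarrow> 'a \<Rightarrow> 'a list \<Rightarrow> 'a \<Rightarrow> bool" where
  "walk_betw G u xs v \<longleftrightarrow> walk G xs \<and> hd xs = u \<and> last xs = v"

definition dist :: "'a graph \<Rightarrow> 'a \<Rightarrow> 'a \<Rightarrow> nat" where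
  "dist G u v = (LEAST n. \<exists>xs. walk_betw G u xs v \<and> length xs = Suc n)"

definition shortest_path :: "'a graph \<Rightarrow> 'a \<Rightarrow> 'a list \<Rightarrow> 'a \<Rightarrow> bool" where
  "shortest_path G u xs v \<longleftrightarrow> walk_betw G u xs v \<and> length xs = Suc (dist G u v)"

definition on_shortest_path :: "'a graph \<Rightarrow> 'a \<Rightarrow> 'a \<Rightarrow> 'a \<Rightarrow> bool" where
  "on_shortest_path G u x v \<longleftrightarrow> (\<exists>xs. shortest_path G u xs v \<and> x \<in> set xs)"

definition strong_resolving_set :: "'a graph \<Rightarrow> 'a set \<Rightarrow> bool" where
  "strong_resolving_set G Q \<longleftrightarrow> Q \<subseteq> verts G \<and>
     (\<forall>p\<in>verts G. \<forall>q\<in>verts G. p \<noteq> q \<longrightarrow>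
        (\<exists>s\<in>Q. on_shortest_path G q p s \<or> on_shortest_path G p q s))"

definition sdim :: "'a graph \<Rightarrow> nat" where
  "sdim G = (LEAST c. \<exists>Q. strong_resolving_set G Q \<and> finite Q \<and> card Q = c)"

end

theory Submission
  imports Defs
begin

text \<open>Distances in (C_n \<box> P_k) \<box> P_m add up coordinatewise. For each of the 2n vertices
  ((a, 0), c) with c an end of P_m, the vertex ((a + n div 2, k - 1), m - 1 - c) is at the
  maximal distance n div 2 + (k - 1) + (m - 1), so the two are mutually farthest. A strong
  resolving set must contain one vertex of every mutually farthest pair, since neither can lie
  on a geodesic running beyond the other; these 2n pairs are disjoint, so sdim \<ge> 2n.
  Conversely, take the 2n vertices of the two cycles with b = 0 and c an end of P_m. If q is not
  above p in the P_k coordinate, then q lies on a geodesic from p to ((l, 0), z), where l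
  continues the C_n-geodesic from p through q, and z is the end of P_m beyond q as seen from p.\<close>

lemma walk_Cons:
  "walk G (x # xs) \<longleftrightarrow> x \<in> verts G \<and> (xs = [] \<or> adj G x (hd xs) \<and> walk G xs)"
proof (cases xs)
  case Nil
  then show ?thesis by (auto simp: walk_def)
next
  case (Cons y ys)
  have "(\<forall>i. Suc i < length (x # xs) \<longrightarrow> adj G ((x # xs) ! i) ((x # xs) ! Suc i))
    \<longleftrightarrow> adj G x y \<and> (\<forall>i. Suc i < length xs \<longrightarrow> adj G (xs ! i) (xs ! Suc i))"
    using Cons by (auto simp: All_less_Suc2 simp del: length_Cons)
  then show ?thesis using Cons by (auto simp: walk_def)
qed

lemma walk_append:
  assumes "walk G xs" "walk G ys" "last xs = hd ys"
  shows "walk G (xs @ tl ys)"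
  using assms
proof (induction xs)
  case Nil
  then show ?case by (simp add: walk_def)
next
  case (Cons x xs)
  then show ?case by (cases xs; cases ys) (auto simp: walk_Cons)
qed

lemma walk_split:
  "walk G (ys @ x # zs) \<Longrightarrow> walk G (ys @ [x]) \<and> walk G (x # zs)"
proof (induction ys)
  case Nil
  then show ?case by (auto simp: walk_Cons)
next
  case (Cons y ys)
  then show ?case by (cases ys) (auto simp: walk_Cons)
qed

lemma dist_less_length:
  assumes "walk_betw G u xs v"
  shows "dist G u v < length xs"
proof -
  have "xs \<noteq> []" using assms by (simp add: walk_betw_def walk_def)
  then have "length xs = Suc (length xs - 1)" by simp
  then have "dist G u v \<le> length xs - 1"
    unfolding dist_def using assms by (blast intro: Least_le)
  then show ?thesis using \<open>xs \<noteq> []\<close> by (cases xs) auto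
qed

lemma shortest_path_exists:
  assumes "walk_betw G u xs v"
  shows "\<exists>ys. shortest_path G u ys v"
proof -
  have "\<exists>d ys. walk_betw G u ys v \<and> length ys = Suc d"
    using assms by (metis Suc_pred length_greater_0_conv walk_betw_def walk_def)
  then show ?thesis
    unfolding shortest_path_def dist_def by (rule LeastI_ex)
qed

lemma dist_eq_0_imp_eq:
  assumes "walk_betw G u xs v" "dist G u v = 0"
  shows "u = v"
proof -
  obtain ys where "walk_betw G u ys v" "length ys = 1"
    using shortest_path_exists[OF assms(1)] assms(2) by (auto simp: shortest_path_def)
  then show ?thesis by (auto simp: walk_betw_def length_Suc_conv)
qed

lemma on_shortest_path_split:
  assumes "on_shortest_path G u x v"
  obtains ys zs where "walk_betw G u (ys @ [x]) x" "walk_betw G x (x # zs) v"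
    "length ys + length zs = dist G u v"
proof -
  obtain xs where xs: "shortest_path G u xs v" "x \<in> set xs"
    using assms by (auto simp: on_shortest_path_def)
  then obtain ys zs where split: "xs = ys @ x # zs" by (meson split_list)
  show ?thesis
  proof
    show "walk_betw G u (ys @ [x]) x" "walk_betw G x (x # zs) v"
      using xs split walk_split[of G ys x zs]
      by (cases ys; auto simp: shortest_path_def walk_betw_def)+
    show "length ys + length zs = dist G u v"
      using xs split by (simp add: shortest_path_def)
  qed
qed

lemma on_shortest_path_dist_add_le:
  assumes "on_shortest_path G u x v"
  shows "dist G u x + dist G x v \<le> dist G u v"
proof -
  obtain ys zs where "walk_betw G u (ys @ [x]) x" "walk_betw G x (x # zs) v"
    "length ys + length zs = dist G u v"
    using on_shortest_path_split[OF assms] .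
  then show ?thesis
    using dist_less_length[of G u "ys @ [x]" x] dist_less_length[of G x "x # zs" v] by simp
qed

lemma on_shortest_path_dist_eq_0_imp_eq:
  assumes "on_shortest_path G u x v" "dist G x v = 0"
  shows "x = v"
proof -
  obtain ys zs where "walk_betw G x (x # zs) v"
    using on_shortest_path_split[OF assms(1)] .
  then show ?thesis using assms(2) by (rule dist_eq_0_imp_eq)
qed

definition graph_connected :: "'a graph \<Rightarrow> bool" where
  "graph_connected G \<longleftrightarrow> (\<forall>u\<in>verts G. \<forall>v\<in>verts G. \<exists>xs. walk_betw G u xs v)"

lemma on_shortest_path_if_dist_add:
  assumes "graph_connected G" "u \<in> verts G" "x \<in> verts G" "v \<in> verts G"
    and "dist G u x + dist G x v = dist G u v"
  shows "on_shortest_path G u x v"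
proof -
  obtain xs ys where xs: "shortest_path G u xs x" and ys: "shortest_path G x ys v"
    using assms(1-4) shortest_path_exists unfolding graph_connected_def by meson
  then have "walk G (xs @ tl ys)"
    by (intro walk_append) (auto simp: shortest_path_def walk_betw_def)
  moreover have "hd (xs @ tl ys) = u" "last (xs @ tl ys) = v" "x \<in> set (xs @ tl ys)"
    using xs ys by (cases ys; auto simp: shortest_path_def walk_betw_def walk_def)+
  ultimately show ?thesis
    using xs ys assms(5)
    unfolding on_shortest_path_def shortest_path_def walk_betw_def by fastforce
qed

text \<open>Since D drops by at most one along an edge, it is bounded by the length of every walk;
  descending to a closer neighbour builds a walk of length D. Hence D is the graph distance.\<close>

definition dist_certificate :: "'a graph \<Rightarrow> ('a \<Rightarrow> 'a \<Rightarrow> nat) \<Rightarrow> bool" where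
  "dist_certificate G D \<longleftrightarrow> (\<forall>u\<in>verts G. \<forall>v\<in>verts G.
     (D u v = 0 \<longleftrightarrow> u = v) \<and>
     (\<forall>w\<in>verts G. adj G u w \<longrightarrow> D u v \<le> D w v + 1) \<and>
     (0 < D u v \<longrightarrow> (\<exists>w\<in>verts G. adj G u w \<and> D w v + 1 = D u v)))"

lemma dist_certificateI:
  assumes "\<And>u v. u \<in> verts G \<Longrightarrow> v \<in> verts G \<Longrightarrow> D u v = 0 \<longleftrightarrow> u = v"
    and "\<And>u v w. u \<in> verts G \<Longrightarrow> v \<in> verts G \<Longrightarrow> w \<in> verts G \<Longrightarrow> adj G u w \<Longrightarrow>
      D u v \<le> D w v + 1"
    and "\<And>u v. u \<in> verts G \<Longrightarrow> v \<in> verts G \<Longrightarrow> 0 < D u v \<Longrightarrow>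
      \<exists>w\<in>verts G. adj G u w \<and> D w v + 1 = D u v"
  shows "dist_certificate G D"
  using assms unfolding dist_certificate_def by auto

context
  fixes G :: "'a graph" and D :: "'a \<Rightarrow> 'a \<Rightarrow> nat"
  assumes D: "dist_certificate G D"
begin

lemma dist_certificate_eq_0_iff:
  "u \<in> verts G \<Longrightarrow> v \<in> verts G \<Longrightarrow> D u v = 0 \<longleftrightarrow> u = v"
  using D unfolding dist_certificate_def by auto

lemma dist_certificate_adj_le:
  "u \<in> verts G \<Longrightarrow> v \<in> verts G \<Longrightarrow> w \<in> verts G \<Longrightarrow> adj G u w \<Longrightarrow> D u v \<le> D w v + 1"
  using D unfolding dist_certificate_def by blast

lemma dist_certificate_descent:
  assumes "u \<in> verts G" "v \<in> verts G" "0 < D u v"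
  obtains w where "w \<in> verts G" "adj G u w" "D w v + 1 = D u v"
  using D assms unfolding dist_certificate_def by blast

lemma dist_certificate_less_length:
  assumes "walk_betw G u xs v"
  shows "D u v < length xs"
  using assms unfolding walk_betw_def
proof (induction xs arbitrary: u)
  case Nil
  then show ?case by (simp add: walk_def)
next
  case (Cons x xs)
  have "u \<in> verts G" "v \<in> verts G"
    using Cons.prems last_in_set[of "x # xs"] by (auto simp: walk_def)
  show ?case
  proof (cases xs)
    case Nil
    then show ?thesis using Cons.prems dist_certificate_eq_0_iff \<open>v \<in> verts G\<close> by auto
  next
    case (Cons y ys)
    then have "walk G xs" "adj G u y" "y \<in> verts G"
      using Cons.prems by (auto simp: walk_Cons)
    moreover have "D y v < length xs" using Cons.IH Cons.prems \<open>walk G xs\<close> Cons by simp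
    ultimately show ?thesis
      using dist_certificate_adj_le[of u v y] \<open>u \<in> verts G\<close> \<open>v \<in> verts G\<close> by simp
  qed
qed

lemma dist_certificate_walk_exists:
  assumes "u \<in> verts G" "v \<in> verts G"
  shows "\<exists>xs. walk_betw G u xs v \<and> length xs = Suc (D u v)"
  using assms(1)
proof (induction "D u v" arbitrary: u)
  case 0
  then have "u = v" using dist_certificate_eq_0_iff assms(2) by simp
  then show ?case using 0 by (intro exI[of _ "[u]"]) (auto simp: walk_betw_def walk_def)
next
  case (Suc d)
  then obtain w where w: "w \<in> verts G" "adj G u w" "D w v + 1 = D u v"
    using dist_certificate_descent assms(2) by (metis zero_less_Suc)
  then have "d = D w v" using Suc.hyps(2) by simp
  then obtain xs where "walk_betw G w xs v" "length xs = Suc (D w v)"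
    using Suc.hyps(1) w(1) by blast
  then show ?case
    using w Suc.prems by (intro exI[of _ "u # xs"]) (cases xs; auto simp: walk_betw_def walk_Cons)
qed

lemma dist_certificate_connected: "graph_connected G"
  using dist_certificate_walk_exists by (fastforce simp: graph_connected_def)

lemma dist_eq_certificate:
  assumes "u \<in> verts G" "v \<in> verts G"
  shows "dist G u v = D u v"
proof (rule antisym)
  obtain xs where xs: "walk_betw G u xs v" "length xs = Suc (D u v)"
    using dist_certificate_walk_exists[OF assms] by blast
  then show "dist G u v \<le> D u v" using dist_less_length by fastforce
  obtain ys where "shortest_path G u ys v"
    using shortest_path_exists[OF xs(1)] by blast
  then show "D u v \<le> dist G u v"
    using dist_certificate_less_length by (fastforce simp: shortest_path_def)
qed

end

lemma verts_cart_prod: "verts (cart_prod G H) = verts G \<times> verts H"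
  by (simp add: verts_def cart_prod_def)

lemma adj_cart_prod: "adj (cart_prod G H) (g1, h1) (g2, h2) \<longleftrightarrow>
   h1 = h2 \<and> h1 \<in> verts H \<and> adj G g1 g2 \<or> g1 = g2 \<and> g1 \<in> verts G \<and> adj H h1 h2"
  by (simp add: adj_def cart_prod_def)

lemma dist_certificate_cart_prod:
  assumes DG: "dist_certificate G DG" and DH: "dist_certificate H DH"
  shows "dist_certificate (cart_prod G H) (\<lambda>(g1, h1) (g2, h2). DG g1 g2 + DH h1 h2)"
    (is "dist_certificate ?G ?D")
proof (rule dist_certificateI)
  fix u v assume "u \<in> verts ?G" "v \<in> verts ?G"
  then obtain g1 h1 g2 h2 where uv: "u = (g1, h1)" "v = (g2, h2)"
    and vs: "g1 \<in> verts G" "h1 \<in> verts H" "g2 \<in> verts G" "h2 \<in> verts H"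
    by (auto simp: verts_cart_prod)
  show "?D u v = 0 \<longleftrightarrow> u = v"
    using vs dist_certificate_eq_0_iff[OF DG] dist_certificate_eq_0_iff[OF DH] by (simp add: uv)
  show "?D u v \<le> ?D w v + 1" if "w \<in> verts ?G" and adj_uw: "adj ?G u w" for w
  proof -
    obtain g h where w: "w = (g, h)" "g \<in> verts G" "h \<in> verts H"
      using \<open>w \<in> verts ?G\<close> by (auto simp: verts_cart_prod)
    then consider "h = h1" "adj G g1 g" | "g = g1" "adj H h1 h"
      using adj_uw by (auto simp: uv adj_cart_prod)
    then show ?thesis
    proof cases
      case 1
      then show ?thesis using dist_certificate_adj_le[OF DG vs(1,3) w(2)] by (simp add: uv w)
    next
      case 2
      then show ?thesis using dist_certificate_adj_le[OF DH vs(2,4) w(3)] by (simp add: uv w)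
    qed
  qed
  show "\<exists>w\<in>verts ?G. adj ?G u w \<and> ?D w v + 1 = ?D u v" if pos: "0 < ?D u v"
  proof (cases "0 < DG g1 g2")
    case True
    with vs obtain g where "g \<in> verts G" "adj G g1 g" "DG g g2 + 1 = DG g1 g2"
      by (blast elim: dist_certificate_descent[OF DG])
    with vs show ?thesis
      by (intro bexI[of _ "(g, h1)"]) (auto simp: uv verts_cart_prod adj_cart_prod)
  next
    case False
    with pos vs obtain h where "h \<in> verts H" "adj H h1 h" "DH h h2 + 1 = DH h1 h2"
      by (auto simp: uv elim: dist_certificate_descent[OF DH])
    with vs False show ?thesis
      by (intro bexI[of _ "(g1, h)"]) (auto simp: uv verts_cart_prod adj_cart_prod)
  qed
qed

definition path_dist :: "nat \<Rightarrow> nat \<Rightarrow> nat" where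
  "path_dist i j = (if i \<le> j then j - i else i - j)"

definition cycle_dist :: "nat \<Rightarrow> nat \<Rightarrow> nat \<Rightarrow> nat" where
  "cycle_dist n i j = min (path_dist i j) (n - path_dist i j)"

lemma path_dist_sym: "path_dist i j = path_dist j i"
  by (simp add: path_dist_def)

lemma cycle_dist_sym: "cycle_dist n i j = cycle_dist n j i"
  by (simp add: cycle_dist_def path_dist_sym)

lemma verts_path_graph: "verts (path_graph k) = {0..<k}"
  by (simp add: verts_def path_graph_def)

lemma adj_path_graph: "adj (path_graph k) i j \<longleftrightarrow> i < k \<and> j < k \<and> (j = i + 1 \<or> i = j + 1)"
  by (simp add: adj_def path_graph_def)

lemma verts_cycle_graph: "verts (cycle_graph n) = {0..<n}"
  by (simp add: verts_def cycle_graph_def)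

lemma adj_cycle_graph: "adj (cycle_graph n) i j \<longleftrightarrow> i < n \<and> j < n \<and> i \<noteq> j \<and>
    (j = i + 1 \<or> i = j + 1 \<or> i = n - 1 \<and> j = 0 \<or> j = n - 1 \<and> i = 0)"
  by (auto simp: adj_def cycle_graph_def mod_Suc)

lemma dist_certificate_path_graph: "dist_certificate (path_graph k) path_dist"
proof (rule dist_certificateI)
  fix i j assume "i \<in> verts (path_graph k)" "j \<in> verts (path_graph k)"
  then have "i < k" "j < k" by (auto simp: verts_path_graph)
  show "path_dist i j = 0 \<longleftrightarrow> i = j" by (auto simp: path_dist_def)
  show "path_dist i j \<le> path_dist l j + 1" if "adj (path_graph k) i l" for l
    using that by (auto simp: path_dist_def adj_path_graph)
  show "\<exists>l\<in>verts (path_graph k). adj (path_graph k) i l \<and> path_dist l j + 1 = path_dist i j"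
    if "0 < path_dist i j"
    using that \<open>i < k\<close> \<open>j < k\<close>
    by (intro bexI[of _ "if i < j then i + 1 else i - 1"])
      (auto simp: path_dist_def adj_path_graph verts_path_graph)
qed

lemma dist_certificate_cycle_graph: "dist_certificate (cycle_graph n) (cycle_dist n)"
proof (rule dist_certificateI)
  fix i j assume "i \<in> verts (cycle_graph n)" "j \<in> verts (cycle_graph n)"
  then have "i < n" "j < n" by (auto simp: verts_cycle_graph)
  then show "cycle_dist n i j = 0 \<longleftrightarrow> i = j" by (auto simp: cycle_dist_def path_dist_def)
  show "cycle_dist n i j \<le> cycle_dist n l j + 1" if "adj (cycle_graph n) i l" for l
    using that \<open>j < n\<close> by (auto simp: cycle_dist_def path_dist_def adj_cycle_graph)
  show "\<exists>l\<in>verts (cycle_graph n).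
      adj (cycle_graph n) i l \<and> cycle_dist n l j + 1 = cycle_dist n i j"
    if pos: "0 < cycle_dist n i j"
  proof -
    consider "i < j" "path_dist i j \<le> n - path_dist i j"
      | "j < i" "path_dist i j \<le> n - path_dist i j"
      | "i < j" "n - path_dist i j < path_dist i j" | "j < i" "n - path_dist i j < path_dist i j"
      using pos by (cases i j rule: linorder_cases;
          cases "path_dist i j \<le> n - path_dist i j") (auto simp: cycle_dist_def path_dist_def)
    then show ?thesis
    proof cases
      case 1
      then show ?thesis using \<open>j < n\<close> by (intro bexI[of _ "i + 1"])
        (auto simp: cycle_dist_def path_dist_def adj_cycle_graph verts_cycle_graph)
    next
      case 2
      then show ?thesis using \<open>i < n\<close> by (intro bexI[of _ "i - 1"])
        (auto simp: cycle_dist_def path_dist_def adj_cycle_graph verts_cycle_graph)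
    next
      case 3
      then show ?thesis using \<open>j < n\<close> by (intro bexI[of _ "if i = 0 then n - 1 else i - 1"])
        (auto simp: cycle_dist_def path_dist_def adj_cycle_graph verts_cycle_graph)
    next
      case 4
      then show ?thesis using \<open>i < n\<close> by (intro bexI[of _ "if i + 1 = n then 0 else i + 1"])
        (auto simp: cycle_dist_def path_dist_def adj_cycle_graph verts_cycle_graph)
    qed
  qed
qed

lemma cycle_dist_le_half: "cycle_dist n i j \<le> n div 2"
  by (auto simp: cycle_dist_def path_dist_def)

definition antipode :: "nat \<Rightarrow> nat \<Rightarrow> nat" where
  "antipode n i = (i + n div 2) mod n"

lemma antipode_less: "i < n \<Longrightarrow> antipode n i < n"
  by (simp add: antipode_def)

lemma antipode_eq:
  "i < n \<Longrightarrow> antipode n i = (if i + n div 2 < n then i + n div 2 else i + n div 2 - n)"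
  unfolding antipode_def by (simp add: mod_if)

lemma cycle_dist_antipode: "i < n \<Longrightarrow> cycle_dist n i (antipode n i) = n div 2"
  using antipode_eq[of i n] by (auto simp: cycle_dist_def path_dist_def)

lemma inj_on_antipode: "inj_on (antipode n) {0..<n}"
  by (auto simp: inj_on_def antipode_eq split: if_splits)

lemma cycle_dist_extend:
  assumes "i < n" "j < n"
  shows "\<exists>l<n. cycle_dist n i j + cycle_dist n j l = cycle_dist n i l"
proof -
  define h where "h = n div 2"
  have n: "n = 2 * h \<or> n = 2 * h + 1" unfolding h_def by auto
  txt \<open>l is the antipode i + h or i - h (mod n), whichever lies beyond j as seen from i.\<close>
  consider "i \<le> j" "j - i \<le> h" | "j < i" "j + n - i \<le> h"
    | "i \<le> j" "h < j - i" | "j < i" "h < j + n - i"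
    by linarith
  then show ?thesis
  proof cases
    case 1
    then show ?thesis using assms n
      by (intro exI[of _ "if i + h < n then i + h else i + h - n"])
        (auto simp: cycle_dist_def path_dist_def h_def[symmetric])
  next
    case 2
    then show ?thesis using assms n
      by (intro exI[of _ "if i + h < n then i + h else i + h - n"])
        (auto simp: cycle_dist_def path_dist_def h_def[symmetric])
  next
    case 3
    then show ?thesis using assms n
      by (intro exI[of _ "if h \<le> i then i - h else i + n - h"])
        (auto simp: cycle_dist_def path_dist_def h_def[symmetric])
  next
    case 4
    then show ?thesis using assms n
      by (intro exI[of _ "if h \<le> i then i - h else i + n - h"])
        (auto simp: cycle_dist_def path_dist_def h_def[symmetric])
  qed
qed

definition mutually_farthest :: "'a graph \<Rightarrow> 'a \<Rightarrow> 'a \<Rightarrow> bool" where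
  "mutually_farthest G u v \<longleftrightarrow>
     (\<forall>s\<in>verts G. dist G u s \<le> dist G u v) \<and> (\<forall>s\<in>verts G. dist G v s \<le> dist G v u)"

lemma strong_resolving_set_mutually_farthest:
  assumes Q: "strong_resolving_set G Q" and "u \<in> verts G" "v \<in> verts G" "u \<noteq> v"
    and far: "mutually_farthest G u v"
  shows "u \<in> Q \<or> v \<in> Q"
proof -
  obtain s where "s \<in> Q" "s \<in> verts G"
    and "on_shortest_path G v u s \<or> on_shortest_path G u v s"
    using Q assms(2-4) unfolding strong_resolving_set_def by blast
  then consider "on_shortest_path G v u s" | "on_shortest_path G u v s" by blast
  then show ?thesis
  proof cases
    case 1
    then have "dist G v u + dist G u s \<le> dist G v u"
      using on_shortest_path_dist_add_le far \<open>s \<in> verts G\<close>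
      by (fastforce simp: mutually_farthest_def)
    then have "u = s" using on_shortest_path_dist_eq_0_imp_eq[OF 1] by simp
    then show ?thesis using \<open>s \<in> Q\<close> by simp
  next
    case 2
    then have "dist G u v + dist G v s \<le> dist G u v"
      using on_shortest_path_dist_add_le far \<open>s \<in> verts G\<close>
      by (fastforce simp: mutually_farthest_def)
    then have "v = s" using on_shortest_path_dist_eq_0_imp_eq[OF 2] by simp
    then show ?thesis using \<open>s \<in> Q\<close> by simp
  qed
qed

lemma sdim_eqI:
  assumes "strong_resolving_set G Q" "finite Q" "card Q = c"
    and "\<And>Q. strong_resolving_set G Q \<Longrightarrow> finite Q \<Longrightarrow> c \<le> card Q"
  shows "sdim G = c"
  unfolding sdim_def by (rule Least_equality) (use assms in auto)

abbreviation cycle_grid :: "nat \<Rightarrow> nat \<Rightarrow> nat \<Rightarrow> ((nat \<times> nat) \<times> nat) graph" where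
  "cycle_grid n k m \<equiv> cart_prod (cart_prod (cycle_graph n) (path_graph k)) (path_graph m)"

lemma verts_cycle_grid: "verts (cycle_grid n k m) = ({0..<n} \<times> {0..<k}) \<times> {0..<m}"
  by (simp add: verts_cart_prod verts_cycle_graph verts_path_graph)

lemma dist_certificate_cycle_grid:
  "dist_certificate (cycle_grid n k m)
     (\<lambda>((a, b), c) ((a', b'), c'). cycle_dist n a a' + path_dist b b' + path_dist c c')"
  using dist_certificate_cart_prod[OF dist_certificate_cart_prod
      [OF dist_certificate_cycle_graph dist_certificate_path_graph] dist_certificate_path_graph]
  by (simp add: case_prod_beta')

lemma dist_cycle_grid:
  assumes "((a, b), c) \<in> verts (cycle_grid n k m)" "((a', b'), c') \<in> verts (cycle_grid n k m)"
  shows "dist (cycle_grid n k m) ((a, b), c) ((a', b'), c') =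
    cycle_dist n a a' + path_dist b b' + path_dist c c'"
  using dist_eq_certificate[OF dist_certificate_cycle_grid assms] by simp

lemma dist_cycle_grid_le_diameter:
  assumes "u \<in> verts (cycle_grid n k m)" "v \<in> verts (cycle_grid n k m)"
  shows "dist (cycle_grid n k m) u v \<le> n div 2 + (k - 1) + (m - 1)"
proof -
  obtain a b c a' b' c' where uv: "u = ((a, b), c)" "v = ((a', b'), c')"
    by (metis prod.exhaust)
  have "path_dist b b' \<le> k - 1" "path_dist c c' \<le> m - 1"
    using assms by (auto simp: uv verts_cycle_grid path_dist_def)
  then show ?thesis
    using assms dist_cycle_grid cycle_dist_le_half[of n a a'] unfolding uv by fastforce
qed

lemma mutually_farthest_cycle_grid:
  assumes "a < n" "0 < k" "c = 0 \<or> c = m - 1" "0 < m"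
  shows "mutually_farthest (cycle_grid n k m) ((a, 0), c) ((antipode n a, k - 1), m - 1 - c)"
proof -
  let ?u = "((a, 0), c)" and ?v = "((antipode n a, k - 1), m - 1 - c)"
  have "?u \<in> verts (cycle_grid n k m)" "?v \<in> verts (cycle_grid n k m)"
    using assms antipode_less[OF assms(1)] by (auto simp: verts_cycle_grid)
  moreover have "dist (cycle_grid n k m) ?u ?v = n div 2 + (k - 1) + (m - 1)"
    "dist (cycle_grid n k m) ?v ?u = n div 2 + (k - 1) + (m - 1)"
    using calculation assms(3,4) by (auto simp: dist_cycle_grid cycle_dist_antipode[OF assms(1)]
        cycle_dist_sym path_dist_def)
  ultimately show ?thesis
    using dist_cycle_grid_le_diameter by (simp add: mutually_farthest_def)
qed

lemma card_strong_resolving_set_cycle_grid_ge: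
  assumes "1 < k" "1 < m" and Q: "strong_resolving_set (cycle_grid n k m) Q" "finite Q"
  shows "2 * n \<le> card Q"
proof -
  define I where "I = {0..<n} \<times> {0, m - 1}"
  define near where "near = (\<lambda>(a, c). ((a, 0), c) :: (nat \<times> nat) \<times> nat)"
  define far where "far = (\<lambda>(a, c). ((antipode n a, k - 1), m - 1 - c))"
  have "card I \<le> card Q"
  proof (rule card_le_if_inj_on_rel[where r = "\<lambda>i x. x = near i \<or> x = far i"])
    show "finite Q" by fact
    show "\<exists>x. x \<in> Q \<and> (x = near i \<or> x = far i)" if "i \<in> I" for i
    proof -
      obtain a c where i: "i = (a, c)" "a < n" "c = 0 \<or> c = m - 1"
        using \<open>i \<in> I\<close> by (auto simp: I_def)
      have "mutually_farthest (cycle_grid n k m) (near i) (far i)"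
        using mutually_farthest_cycle_grid[of a n k c m] i assms(1,2)
        by (simp add: near_def far_def)
      then have "near i \<in> Q \<or> far i \<in> Q"
        using assms(1,2) i by (intro strong_resolving_set_mutually_farthest[OF Q(1)])
          (auto simp: near_def far_def verts_cycle_grid antipode_less)
      then show ?thesis by blast
    qed
    show "i = j" if "i \<in> I" "j \<in> I" "x = near i \<or> x = far i" "x = near j \<or> x = far j"
      for i j x
      using that assms(1) inj_on_antipode[of n]
      by (auto simp: I_def near_def far_def inj_on_def)
  qed
  moreover have "card I = 2 * n" using assms(2) by (simp add: I_def card_cartesian_product)
  ultimately show ?thesis by simp
qed

definition corner_cycles :: "nat \<Rightarrow> nat \<Rightarrow> ((nat \<times> nat) \<times> nat) set" where
  "corner_cycles n m = (\<lambda>(a, c). ((a, 0), c)) ` ({0..<n} \<times> {0, m - 1})"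

lemma card_corner_cycles: "1 < m \<Longrightarrow> card (corner_cycles n m) = 2 * n"
  unfolding corner_cycles_def
  by (subst card_image) (auto simp: inj_on_def card_cartesian_product)

lemma corner_cycles_on_shortest_path:
  assumes "0 < m" and p: "((a, b), c) \<in> verts (cycle_grid n k m)"
    and q: "((a', b'), c') \<in> verts (cycle_grid n k m)" and "b' \<le> b"
  shows "\<exists>s\<in>corner_cycles n m. on_shortest_path (cycle_grid n k m) ((a, b), c) ((a', b'), c') s"
proof -
  have "a < n" "a' < n" using p q by (auto simp: verts_cycle_grid)
  then obtain l where "l < n" "cycle_dist n a a' + cycle_dist n a' l = cycle_dist n a l"
    using cycle_dist_extend by blast
  define z where "z = (if c' \<le> c then 0 else m - 1)"
  let ?G = "cycle_grid n k m" and ?p = "((a, b), c)" and ?q = "((a', b'), c')"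
    and ?s = "((l, 0), z)"
  have s: "?s \<in> verts ?G"
    using \<open>l < n\<close> p \<open>0 < m\<close> by (auto simp: verts_cycle_grid z_def)
  have "dist ?G ?p ?q + dist ?G ?q ?s = dist ?G ?p ?s"
    using p q s \<open>b' \<le> b\<close> \<open>cycle_dist n a a' + cycle_dist n a' l = cycle_dist n a l\<close>
    by (auto simp: dist_cycle_grid path_dist_def z_def verts_cycle_grid)
  then have "on_shortest_path ?G ?p ?q ?s"
    using dist_certificate_connected[OF dist_certificate_cycle_grid] p q s
    by (rule on_shortest_path_if_dist_add[rotated -1])
  moreover have "?s \<in> corner_cycles n m"
    using \<open>l < n\<close> by (auto simp: corner_cycles_def z_def)
  ultimately show ?thesis by blast
qed

lemma strong_resolving_set_corner_cycles:
  assumes "0 < k" "0 < m"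
  shows "strong_resolving_set (cycle_grid n k m) (corner_cycles n m)"
  unfolding strong_resolving_set_def
proof (intro conjI ballI impI)
  show "corner_cycles n m \<subseteq> verts (cycle_grid n k m)"
    using assms by (auto simp: corner_cycles_def verts_cycle_grid)
  fix p q assume "p \<in> verts (cycle_grid n k m)" "q \<in> verts (cycle_grid n k m)"
  then obtain a b c a' b' c' where "p = ((a, b), c)" "q = ((a', b'), c')"
    by (metis prod.exhaust)
  then show "\<exists>s\<in>corner_cycles n m.
      on_shortest_path (cycle_grid n k m) q p s \<or> on_shortest_path (cycle_grid n k m) p q s"
    using corner_cycles_on_shortest_path[OF \<open>0 < m\<close>] \<open>p \<in> _\<close> \<open>q \<in> _\<close>
    by (metis nle_le)
qed

theorem theorem3p6:
  fixes n k m :: nat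
  assumes "n \<ge> 3" and "k \<ge> 3" and "m \<ge> 2"
  shows "sdim (cart_prod (cart_prod (cycle_graph n) (path_graph k)) (path_graph m)) = 2 * n"
proof (rule sdim_eqI)
  show "strong_resolving_set (cycle_grid n k m) (corner_cycles n m)"
    using assms by (intro strong_resolving_set_corner_cycles) auto
  show "finite (corner_cycles n m)" by (simp add: corner_cycles_def)
  show "card (corner_cycles n m) = 2 * n" using assms by (simp add: card_corner_cycles)
  show "2 * n \<le> card Q" if "strong_resolving_set (cycle_grid n k m) Q" "finite Q" for Q
    using assms that by (intro card_strong_resolving_set_cycle_grid_ge) auto
qed

end
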